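(* For all metric formulas $\varphi,\psi,\chi$ the following equivalences hold in MHT: $\bigcirc_I(\varphi\vee\psi)\equiv\bigcirc_I\varphi\vee\bigcirc_I\psi$; $\bigcirc_I(\varphi\wedge\psi)\equiv\bigcirc_I\varphi\wedge\bigcirc_I\psi$; $\widehat{\bigcirc}_I(\varphi\vee\psi)\equiv\widehat{\bigcirc}_I\varphi\vee\widehat{\bigcirc}_I\psi$; $\widehat{\bigcirc}_I(\varphi\wedge\psi)\equiv\widehat{\bigcirc}_I\varphi\wedge\widehat{\bigcirc}_I\psi$; $\Diamond_I(\varphi\vee\psi)\equiv\Diamond_I\varphi\vee\Diamond_I\psi$; $\Box_I(\varphi\wedge\psi)\equiv\Box_I\varphi\wedge\Box_I\psi$; $\widehat{\bullet}_I(\varphi\vee\psi)\equiv\widehat{\bullet}_I\varphi\vee\widehat{\bullet}_I\psi$; $\widehat{\bullet}_I(\varphi\wedge\psi)\equiv\widehat{\bullet}_I\varphi\wedge\widehat{\bullet}_I\psi$; $\top\,\mathsf{S}_I\,(\varphi\vee\psi)\equiv(\top\,\mathsf{S}_I\,\varphi)\vee(\top\,\mathsf{S}_I\,\psi)$; $(\varphi\vee\chi)\,\mathsf{T}_I\,\psi\equiv(\varphi\,\mathsf{T}_I\,\psi)\vee(\chi\,\mathsf{T}_I\,\psi)$; $\varphi\,\mathsf{U}_I\,(\chi\vee\psi)\equiv(\varphi\,\mathsf{U}_I\,\chi)\vee(\varphi\,\mathsf{U}_I\,\psi)$; $(\varphi\wedge\chi)\,\mathsf{U}_I\,\psi\equiv(\varphi\,\mathsf{U}_I\,\psi)\wedge(\chi\,\mathsf{U}_I\,\psi)$;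 $\varphi\,\mathsf{R}_I\,(\chi\wedge\psi)\equiv(\varphi\,\mathsf{R}_I\,\chi)\wedge(\varphi\,\mathsf{R}_I\,\psi)$; $(\varphi\vee\chi)\,\mathsf{R}_I\,\psi\equiv(\varphi\,\mathsf{R}_I\,\psi)\vee(\chi\,\mathsf{R}_I\,\psi)$; $(\varphi\wedge\chi)\,\mathsf{S}_I\,\psi\equiv(\varphi\,\mathsf{S}_I\,\psi)\wedge(\chi\,\mathsf{S}_I\,\psi)$; $\varphi\,\mathsf{S}_I\,(\chi\vee\psi)\equiv(\varphi\,\mathsf{S}_I\,\chi)\vee(\varphi\,\mathsf{S}_I\,\psi)$; $\bullet_I(\varphi\vee\psi)\equiv\bullet_I\varphi\vee\bullet_I\psi$; $\bullet_I(\varphi\wedge\psi)\equiv\bullet_I\varphi\wedge\bullet_I\psi$; $\blacksquare_I(\varphi\wedge\psi)\equiv\blacksquare_I\varphi\wedge\blacksquare_I\psi$; $\varphi\,\mathsf{T}_I\,(\chi\wedge\psi)\equiv(\varphi\,\mathsf{T}_I\,\chi)\wedge(\varphi\,\mathsf{T}_I\,\psi)$.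
   Context: Metric formulas over $\mathcal{A}$: $\varphi ::= p \mid \bot \mid \varphi_1\otimes\varphi_2 \mid \bullet_I\varphi \mid \varphi_1\,\mathsf{S}_I\,\varphi_2 \mid \varphi_1\,\mathsf{T}_I\,\varphi_2 \mid \bigcirc_I\varphi \mid \varphi_1\,\mathsf{U}_I\,\varphi_2 \mid \varphi_1\,\mathsf{R}_I\,\varphi_2$, $\otimes\in\{\to,\wedge,\vee\}$, $I=[m,n)$, $m\in\mathbb{N}$, $n\in\mathbb{N}\cup\{\omega\}$. Derived: $\neg\varphi=\varphi\to\bot$, $\top=\neg\bot$, $\blacksquare_I\varphi=\bot\,\mathsf{T}_I\,\varphi$ (always before), $\top\,\mathsf{S}_I\,\varphi$ (eventually before), $\widehat{\bullet}_I\varphi=\bullet_I\varphi\vee\neg\bullet_I\top$, $\Box_I\varphi=\bot\,\mathsf{R}_I\,\varphi$, $\Diamond_I\varphi=\top\,\mathsf{U}_I\,\varphi$, $\widehat{\bigcirc}_I\varphi=\bigcirc_I\varphi\vee\neg\bigcirc_I\top$. Timed HT-trace $\mathbf{M}=(\langle\mathbf{H},\mathbf{T}\rangle,\tau)$ of length $\lambda$: $H_i\subseteq T_i\subseteq\mathcal{A}$, $\tau:[0,\lambda)\to\mathbb{N}$, $\tau(0)=0$, $\tau(i)\le\tau(i+1)$. Satisfaction at $k$: $\bot$ never; $p$ iff $p\in H_k$; $\wedge,\vee$ usual; $\varphi\to\psi$ iff for both $\mathbf{M}'=\mathbf{M}$ and $\mathbf{M}'=(\langle\mathbf{T},\mathbf{T}\rangle,\tau)$,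 $\mathbf{M}',k\not\models\varphi$ or $\mathbf{M}',k\models\psi$; $\bullet_I\varphi$: $k>0$, $\varphi$ at $k-1$, $\tau(k)-\tau(k-1)\in I$; $\varphi\,\mathsf{S}_I\,\psi$: some $j\in[0,k]$ with $\tau(k)-\tau(j)\in I$, $\psi$ at $j$, $\varphi$ at all $i\in(j,k]$; $\varphi\,\mathsf{T}_I\,\psi$: for all such $j$, $\psi$ at $j$ or $\varphi$ at some $i\in(j,k]$; $\bigcirc_I\varphi$: $k+1<\lambda$, $\varphi$ at $k+1$, $\tau(k+1)-\tau(k)\in I$; $\varphi\,\mathsf{U}_I\,\psi$: some $j\in[k,\lambda)$ with $\tau(j)-\tau(k)\in I$, $\psi$ at $j$, $\varphi$ at all $i\in[k,j)$; $\varphi\,\mathsf{R}_I\,\psi$: for all such $j$, $\psi$ at $j$ or $\varphi$ at some $i\in[k,j)$. $\varphi\equiv\psi$ in MHT iff $\mathbf{M},k\models\varphi\leftrightarrow\psi$ for all timed HT-traces $\mathbf{M}$ and all $k$. *)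

theory Defs
  imports Main "HOL-Library.Extended_Nat"
begin

type_synonym interval = "nat \<times> enat"

definition inI :: "interval \<Rightarrow> nat \<Rightarrow> bool" where
  "inI I d \<longleftrightarrow> fst I \<le> d \<and> enat d < snd I"

datatype 'a mform =
    Atom 'a
  | Bot
  | Impl "'a mform" "'a mform"
  | Conj "'a mform" "'a mform"
  | Disj "'a mform" "'a mform"
  | Prev interval "'a mform"
  | Since interval "'a mform" "'a mform"
  | Trigger interval "'a mform" "'a mform"
  | Next interval "'a mform"
  | Until interval "'a mform" "'a mform"
  | Release interval "'a mform" "'a mform"

text \<open>Timed HT-trace: here-sets H, there-sets T, timing function tau, length lam (possibly omega).\<close>
definition timed_ht_trace ::
  "(nat \<Rightarrow> 'a set) \<Rightarrow> (nat \<Rightarrow> 'a set) \<Rightarrow> (nat \<Rightarrow> nat) \<Rightarrow> enat \<Rightarrow> bool" where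
  "timed_ht_trace H T tau lam \<longleftrightarrow>
     (\<forall>i. enat i < lam \<longrightarrow> H i \<subseteq> T i) \<and> tau 0 = 0 \<and>
     (\<forall>i. enat (Suc i) < lam \<longrightarrow> tau i \<le> tau (Suc i))"

primrec sat ::
  "'a mform \<Rightarrow> (nat \<Rightarrow> 'a set) \<Rightarrow> (nat \<Rightarrow> 'a set) \<Rightarrow> (nat \<Rightarrow> nat) \<Rightarrow> enat \<Rightarrow> nat \<Rightarrow> bool" where
  "sat (Atom p) H T tau lam k = (p \<in> H k)"
| "sat Bot H T tau lam k = False"
| "sat (Impl f g) H T tau lam k =
     ((sat f H T tau lam k \<longrightarrow> sat g H T tau lam k) \<and>
      (sat f T T tau lam k \<longrightarrow> sat g T T tau lam k))"
| "sat (Conj f g) H T tau lam k = (sat f H T tau lam k \<and> sat g H T tau lam k)"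
| "sat (Disj f g) H T tau lam k = (sat f H T tau lam k \<or> sat g H T tau lam k)"
| "sat (Prev I f) H T tau lam k =
     (0 < k \<and> sat f H T tau lam (k - 1) \<and> inI I (tau k - tau (k - 1)))"
| "sat (Since I f g) H T tau lam k =
     (\<exists>j\<le>k. inI I (tau k - tau j) \<and> sat g H T tau lam j \<and>
        (\<forall>i. j < i \<and> i \<le> k \<longrightarrow> sat f H T tau lam i))"
| "sat (Trigger I f g) H T tau lam k =
     (\<forall>j\<le>k. inI I (tau k - tau j) \<longrightarrow> sat g H T tau lam j \<or>
        (\<exists>i. j < i \<and> i \<le> k \<and> sat f H T tau lam i))"
| "sat (Next I f) H T tau lam k =
     (enat (Suc k) < lam \<and> sat f H T tau lam (Suc k) \<and> inI I (tau (Suc k) - tau k))"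
| "sat (Until I f g) H T tau lam k =
     (\<exists>j. k \<le> j \<and> enat j < lam \<and> inI I (tau j - tau k) \<and> sat g H T tau lam j \<and>
        (\<forall>i. k \<le> i \<and> i < j \<longrightarrow> sat f H T tau lam i))"
| "sat (Release I f g) H T tau lam k =
     (\<forall>j. k \<le> j \<and> enat j < lam \<and> inI I (tau j - tau k) \<longrightarrow> sat g H T tau lam j \<or>
        (\<exists>i. k \<le> i \<and> i < j \<and> sat f H T tau lam i))"

definition Neg :: "'a mform \<Rightarrow> 'a mform" where "Neg f = Impl f Bot"
definition Top :: "'a mform" where "Top = Neg Bot"
definition Iff :: "'a mform \<Rightarrow> 'a mform \<Rightarrow> 'a mform" where
  "Iff f g = Conj (Impl f g) (Impl g f)"
definition AlwaysBefore :: "interval \<Rightarrow> 'a mform \<Rightarrow> 'a mform" where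
  "AlwaysBefore I f = Trigger I Bot f"
definition EventuallyBefore :: "interval \<Rightarrow> 'a mform \<Rightarrow> 'a mform" where
  "EventuallyBefore I f = Since I Top f"
definition WPrev :: "interval \<Rightarrow> 'a mform \<Rightarrow> 'a mform" where
  "WPrev I f = Disj (Prev I f) (Neg (Prev I Top))"
definition Always :: "interval \<Rightarrow> 'a mform \<Rightarrow> 'a mform" where
  "Always I f = Release I Bot f"
definition Eventually :: "interval \<Rightarrow> 'a mform \<Rightarrow> 'a mform" where
  "Eventually I f = Until I Top f"
definition WNext :: "interval \<Rightarrow> 'a mform \<Rightarrow> 'a mform" where
  "WNext I f = Disj (Next I f) (Neg (Next I Top))"

definition mequiv :: "'a mform \<Rightarrow> 'a mform \<Rightarrow> bool" where
  "mequiv f g \<longleftrightarrow> (\<forall>H T tau lam k. timed_ht_trace H T tau lam \<and> enat k < lam \<longrightarrow>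
      sat (Iff f g) H T tau lam k)"

end

theory Submission
  imports Defs
begin

text \<open>An implication is evaluated both at the trace itself and at its there-copy, so formulas
  with the same satisfaction relation on all pairs of valuations are equivalent in MHT. Each
  clause is such a pointwise identity, and all but four follow by unfolding the semantics.
  The exceptions (conjunction on the left of U and S, disjunction on the left of R and T)
  rest on choosing the nearer of two witnesses, which then serves for both.\<close>

lemma mequivI:
  assumes "\<And>H T tau lam k. sat f H T tau lam k \<longleftrightarrow> sat g H T tau lam k"
  shows "mequiv f g"
  using assms by (simp add: mequiv_def Iff_def)

lemma sat_Top [simp]: "sat Top H T tau lam k"
  by (simp add: Top_def Neg_def)

lemma ex_all_from_conj:
  fixes k :: "'a::linorder"
  shows "(\<exists>j. P j \<and> (\<forall>i. k \<le> i \<and> i < j \<longrightarrow> A i)) \<and> (\<exists>j. P j \<and> (\<forall>i. k \<le> i \<and> i < j \<longrightarrow> B i))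
    \<longleftrightarrow> (\<exists>j. P j \<and> (\<forall>i. k \<le> i \<and> i < j \<longrightarrow> A i \<and> B i))"
proof
  assume "(\<exists>j. P j \<and> (\<forall>i. k \<le> i \<and> i < j \<longrightarrow> A i)) \<and> (\<exists>j. P j \<and> (\<forall>i. k \<le> i \<and> i < j \<longrightarrow> B i))"
  then obtain j1 j2 where "P j1" "\<forall>i. k \<le> i \<and> i < j1 \<longrightarrow> A i"
    and "P j2" "\<forall>i. k \<le> i \<and> i < j2 \<longrightarrow> B i"
    by blast
  then have "P (min j1 j2) \<and> (\<forall>i. k \<le> i \<and> i < min j1 j2 \<longrightarrow> A i \<and> B i)"
    by (auto simp: min_def)
  then show "\<exists>j. P j \<and> (\<forall>i. k \<le> i \<and> i < j \<longrightarrow> A i \<and> B i)" ..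
qed blast

lemma ex_all_upto_conj:
  fixes k :: "'a::linorder"
  shows "(\<exists>j. P j \<and> (\<forall>i. j < i \<and> i \<le> k \<longrightarrow> A i)) \<and> (\<exists>j. P j \<and> (\<forall>i. j < i \<and> i \<le> k \<longrightarrow> B i))
    \<longleftrightarrow> (\<exists>j. P j \<and> (\<forall>i. j < i \<and> i \<le> k \<longrightarrow> A i \<and> B i))"
proof
  assume "(\<exists>j. P j \<and> (\<forall>i. j < i \<and> i \<le> k \<longrightarrow> A i)) \<and> (\<exists>j. P j \<and> (\<forall>i. j < i \<and> i \<le> k \<longrightarrow> B i))"
  then obtain j1 j2 where "P j1" "\<forall>i. j1 < i \<and> i \<le> k \<longrightarrow> A i"
    and "P j2" "\<forall>i. j2 < i \<and> i \<le> k \<longrightarrow> B i"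
    by blast
  then have "P (max j1 j2) \<and> (\<forall>i. max j1 j2 < i \<and> i \<le> k \<longrightarrow> A i \<and> B i)"
    by (auto simp: max_def)
  then show "\<exists>j. P j \<and> (\<forall>i. j < i \<and> i \<le> k \<longrightarrow> A i \<and> B i)" ..
qed blast

lemma all_ex_from_disj:
  fixes k :: "'a::linorder"
  shows "(\<forall>j. P j \<longrightarrow> (\<exists>i. k \<le> i \<and> i < j \<and> (A i \<or> B i)))
    \<longleftrightarrow> (\<forall>j. P j \<longrightarrow> (\<exists>i. k \<le> i \<and> i < j \<and> A i)) \<or> (\<forall>j. P j \<longrightarrow> (\<exists>i. k \<le> i \<and> i < j \<and> B i))"
  using ex_all_from_conj [of P k "Not \<circ> A" "Not \<circ> B"] by auto

lemma all_ex_upto_disj: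
  fixes k :: "'a::linorder"
  shows "(\<forall>j. P j \<longrightarrow> (\<exists>i. j < i \<and> i \<le> k \<and> (A i \<or> B i)))
    \<longleftrightarrow> (\<forall>j. P j \<longrightarrow> (\<exists>i. j < i \<and> i \<le> k \<and> A i)) \<or> (\<forall>j. P j \<longrightarrow> (\<exists>i. j < i \<and> i \<le> k \<and> B i))"
  using ex_all_upto_conj [of P k "Not \<circ> A" "Not \<circ> B"] by auto

lemma sat_Until_Conj_left:
  "sat (Until I (Conj f h) g) H T tau lam k \<longleftrightarrow>
   sat (Until I f g) H T tau lam k \<and> sat (Until I h g) H T tau lam k"
  using ex_all_from_conj
    [of "\<lambda>j. k \<le> j \<and> enat j < lam \<and> inI I (tau j - tau k) \<and> sat g H T tau lam j"]
  by (simp add: conj_assoc)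

lemma sat_Since_Conj_left:
  "sat (Since I (Conj f h) g) H T tau lam k \<longleftrightarrow>
   sat (Since I f g) H T tau lam k \<and> sat (Since I h g) H T tau lam k"
  using ex_all_upto_conj [of "\<lambda>j. j \<le> k \<and> inI I (tau k - tau j) \<and> sat g H T tau lam j"]
  by (simp add: conj_assoc)

lemma sat_Release_Disj_left:
  "sat (Release I (Disj f h) g) H T tau lam k \<longleftrightarrow>
   sat (Release I f g) H T tau lam k \<or> sat (Release I h g) H T tau lam k"
  using all_ex_from_disj
    [of "\<lambda>j. k \<le> j \<and> enat j < lam \<and> inI I (tau j - tau k) \<and> \<not> sat g H T tau lam j" k
      "sat f H T tau lam" "sat h H T tau lam"]
  by auto

lemma sat_Trigger_Disj_left:
  "sat (Trigger I (Disj f h) g) H T tau lam k \<longleftrightarrow>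
   sat (Trigger I f g) H T tau lam k \<or> sat (Trigger I h g) H T tau lam k"
  using all_ex_upto_disj [of "\<lambda>j. j \<le> k \<and> inI I (tau k - tau j) \<and> \<not> sat g H T tau lam j" k
      "sat f H T tau lam" "sat h H T tau lam"]
  by auto

theorem proposition7:
  fixes \<phi> \<psi> \<chi> :: "'a mform" and I :: interval
  shows
   "mequiv (Next I (Disj \<phi> \<psi>)) (Disj (Next I \<phi>) (Next I \<psi>)) \<and>
    mequiv (Next I (Conj \<phi> \<psi>)) (Conj (Next I \<phi>) (Next I \<psi>)) \<and>
    mequiv (WNext I (Disj \<phi> \<psi>)) (Disj (WNext I \<phi>) (WNext I \<psi>)) \<and>
    mequiv (WNext I (Conj \<phi> \<psi>)) (Conj (WNext I \<phi>) (WNext I \<psi>)) \<and>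
    mequiv (Eventually I (Disj \<phi> \<psi>)) (Disj (Eventually I \<phi>) (Eventually I \<psi>)) \<and>
    mequiv (Always I (Conj \<phi> \<psi>)) (Conj (Always I \<phi>) (Always I \<psi>)) \<and>
    mequiv (WPrev I (Disj \<phi> \<psi>)) (Disj (WPrev I \<phi>) (WPrev I \<psi>)) \<and>
    mequiv (WPrev I (Conj \<phi> \<psi>)) (Conj (WPrev I \<phi>) (WPrev I \<psi>)) \<and>
    mequiv (Since I Top (Disj \<phi> \<psi>)) (Disj (Since I Top \<phi>) (Since I Top \<psi>)) \<and>
    mequiv (Trigger I (Disj \<phi> \<chi>) \<psi>) (Disj (Trigger I \<phi> \<psi>) (Trigger I \<chi> \<psi>)) \<and>
    mequiv (Until I \<phi> (Disj \<chi> \<psi>)) (Disj (Until I \<phi> \<chi>) (Until I \<phi> \<psi>)) \<and>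
    mequiv (Until I (Conj \<phi> \<chi>) \<psi>) (Conj (Until I \<phi> \<psi>) (Until I \<chi> \<psi>)) \<and>
    mequiv (Release I \<phi> (Conj \<chi> \<psi>)) (Conj (Release I \<phi> \<chi>) (Release I \<phi> \<psi>)) \<and>
    mequiv (Release I (Disj \<phi> \<chi>) \<psi>) (Disj (Release I \<phi> \<psi>) (Release I \<chi> \<psi>)) \<and>
    mequiv (Since I (Conj \<phi> \<chi>) \<psi>) (Conj (Since I \<phi> \<psi>) (Since I \<chi> \<psi>)) \<and>
    mequiv (Since I \<phi> (Disj \<chi> \<psi>)) (Disj (Since I \<phi> \<chi>) (Since I \<phi> \<psi>)) \<and>
    mequiv (Prev I (Disj \<phi> \<psi>)) (Disj (Prev I \<phi>) (Prev I \<psi>)) \<and>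
    mequiv (Prev I (Conj \<phi> \<psi>)) (Conj (Prev I \<phi>) (Prev I \<psi>)) \<and>
    mequiv (AlwaysBefore I (Conj \<phi> \<psi>)) (Conj (AlwaysBefore I \<phi>) (AlwaysBefore I \<psi>)) \<and>
    mequiv (Trigger I \<phi> (Conj \<chi> \<psi>)) (Conj (Trigger I \<phi> \<chi>) (Trigger I \<phi> \<psi>))"
  \<comment> \<open>the four lemmas on the left argument must fire before \<open>sat.simps\<close> unfolds it\<close>
  by (intro conjI; rule mequivI;
      (simp only: sat_Until_Conj_left sat_Since_Conj_left sat_Release_Disj_left
        sat_Trigger_Disj_left sat.simps(4,5))?;
      auto simp: WNext_def WPrev_def Eventually_def Always_def AlwaysBefore_def Neg_def)

end
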